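(* Let $I$ be a quasiconcave function satisfying $\int_0^t\frac{I(s)}{s}ds\lesssim I(t)$ for $t\in(0,1)$. Then $$(T_If)^{**}(t)\lesssim (T_If^{**})(t),\quad f\in\mathcal M_+(0,1),\ t\in(0,1).$$
   Context: A quasiconcave function is a nondecreasing bijection $I:(0,1)\to(0,1)$ with $I(0+)=0$, $I(1-)=1$ and $t\mapsto I(t)/t$ nonincreasing. $\mathcal M_+(0,1)$: nonnegative measurable functions; $f^*$: nonincreasing rearrangement; $f^{**}(t)=\frac1t\int_0^tf^*(s)ds$. $T_If(t)=\frac{I(t)}{t}\sup_{t\le s<1}\frac{s}{I(s)}f^*(s)$. $\lesssim$: up to a constant independent of $f,t$. *)

theory Defs
  imports "HOL-Analysis.Analysis"
begin

definition quasiconcave :: "(real \<Rightarrow> real) \<Rightarrow> bool" where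
  "quasiconcave I \<longleftrightarrow>
     bij_betw I {0<..<1} {0<..<1} \<and>
     mono_on {0<..<1} I \<and>
     (I \<longlongrightarrow> 0) (at_right 0) \<and>
     (I \<longlongrightarrow> 1) (at_left 1) \<and>
     (\<forall>s t. 0 < s \<and> s \<le> t \<and> t < 1 \<longrightarrow> I t / t \<le> I s / s)"

definition distr_fun :: "(real \<Rightarrow> ennreal) \<Rightarrow> ennreal \<Rightarrow> ennreal" where
  "distr_fun f y = emeasure lborel {x \<in> {0<..<1}. f x > y}"

definition rearr :: "(real \<Rightarrow> ennreal) \<Rightarrow> real \<Rightarrow> ennreal" where
  "rearr f t = Inf {y. distr_fun f y \<le> ennreal t}"

definition rearr2 :: "(real \<Rightarrow> ennreal) \<Rightarrow> real \<Rightarrow> ennreal" where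
  "rearr2 f t = (\<integral>\<^sup>+ s \<in> {0<..<t}. rearr f s \<partial>lborel) / ennreal t"

definition T_op :: "(real \<Rightarrow> real) \<Rightarrow> (real \<Rightarrow> ennreal) \<Rightarrow> real \<Rightarrow> ennreal" where
  "T_op I f t = ennreal (I t / t) * (SUP s \<in> {t..<1}. ennreal (s / I s) * rearr f s)"

end

theory Submission
  imports Defs
begin

text \<open>
  As \<open>T\<^sub>I f\<close> is nonincreasing, \<open>(T\<^sub>I f)\<^sup>*\<^sup>*(t)\<close> is at most the average of \<open>T\<^sub>I f\<close> over
  \<open>(0,t)\<close>. For \<open>s < t\<close> split the supremum over \<open>u \<ge> s\<close> defining \<open>T\<^sub>I f(s)\<close> at \<open>t\<close>: the part
  \<open>u \<ge> t\<close> is a multiple of the supremum defining \<open>T\<^sub>I f(t)\<close>, and for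
  \<open>s \<le> u < t\<close> monotonicity of \<open>I\<close> and \<open>f\<^sup>*\<close> gives
  \<open>(u/I(u)) f\<^sup>*(u) \<le> 2 \<integral>\<^bsub>u/2\<^esub>\<^bsup>u\<^esup> f\<^sup>*(r)/I(r) dr \<le> 2 \<integral>\<^bsub>s/2\<^esub>\<^bsup>t\<^esup> f\<^sup>*(r)/I(r) dr\<close>.
  Averaging, the first part is controlled by \<open>\<integral>\<^sub>0\<^sup>t I(s)/s ds \<lesssim> I(t)\<close>; the second becomes,
  after Fubini, \<open>\<integral>\<^sub>0\<^sup>t f\<^sup>*(r)/I(r) \<integral>\<^sub>0\<^bsup>2r\<^esup> I(s)/s ds dr \<lesssim> \<integral>\<^sub>0\<^sup>t f\<^sup>*\<close>, since
  \<open>I(2r) \<le> 2 I(r)\<close>. Thus \<open>(T\<^sub>I f)\<^sup>*\<^sup>*(t) \<lesssim> T\<^sub>I f(t) + f\<^sup>*\<^sup>*(t)\<close>, and both terms are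
  \<open>\<lesssim> T\<^sub>I f\<^sup>*\<^sup>*(t)\<close> because \<open>f\<^sup>* \<le> f\<^sup>*\<^sup>* \<le> 2 (f\<^sup>*\<^sup>*)\<^sup>*\<close>.
\<close>

lemma borel_measurable_antimono_ennreal:
  fixes g :: "real \<Rightarrow> ennreal"
  assumes "\<And>x y. x \<le> y \<Longrightarrow> g y \<le> g x"
  shows "g \<in> borel_measurable borel"
proof (rule borel_measurableI_greater)
  fix y
  have "is_interval {x. y < g x}"
    unfolding is_interval_1 using assms by (metis mem_Collect_eq order_less_le_trans)
  then show "{x \<in> space borel. y < g x} \<in> sets borel"
    using real_interval_borel_measurable by simp
qed

lemma rearr_antimono: "s \<le> t \<Longrightarrow> rearr f t \<le> rearr f s"
  unfolding rearr_def
  by (rule Inf_superset_mono) (use ennreal_leI order_trans in blast)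

lemma rearr_measurable [measurable]: "rearr f \<in> borel_measurable borel"
  by (rule borel_measurable_antimono_ennreal) (rule rearr_antimono)

lemma rearr_cong:
  assumes "\<And>x. 0 < x \<Longrightarrow> x < 1 \<Longrightarrow> f x = g x"
  shows "rearr f = rearr g"
proof -
  have "{x \<in> {0<..<1}. y < f x} = {x \<in> {0<..<1}. y < g x}" for y
    using assms by auto
  then show ?thesis unfolding rearr_def distr_fun_def by simp
qed

lemma rearr_le_antimono:
  fixes g :: "real \<Rightarrow> ennreal"
  assumes "\<And>x y. 0 < x \<Longrightarrow> x \<le> y \<Longrightarrow> y < 1 \<Longrightarrow> g y \<le> g x"
    and "0 < s" "s < 1"
  shows "rearr g s \<le> g s"
proof -
  have "{x \<in> {0<..<1}. g s < g x} \<subseteq> {0<..<s}"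
    using assms by (auto simp: not_less[symmetric]) (meson not_le)
  then have "distr_fun g (g s) \<le> emeasure lborel {0<..<s}"
    unfolding distr_fun_def by (rule emeasure_mono) simp
  also have "\<dots> = ennreal s" using assms by simp
  finally show ?thesis unfolding rearr_def by (intro Inf_lower) simp
qed

lemma antimono_le_rearr:
  fixes g :: "real \<Rightarrow> ennreal"
  assumes antimono: "\<And>x y. 0 < x \<Longrightarrow> x \<le> y \<Longrightarrow> y < 1 \<Longrightarrow> g y \<le> g x"
    and "0 < u" "u < v" "v < 1"
  shows "g v \<le> rearr g u"
  unfolding rearr_def
proof (rule Inf_greatest)
  fix y assume "y \<in> {y. distr_fun g y \<le> ennreal u}"
  then have y: "distr_fun g y \<le> ennreal u" by simp
  show "g v \<le> y"
  proof (rule ccontr)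
    assume "\<not> g v \<le> y"
    then have "{0<..v} \<subseteq> {x \<in> {0<..<1}. y < g x}"
      using assms by auto (meson not_le order_trans)
    moreover have "is_interval {x \<in> {0<..<1}. y < g x}"
      unfolding is_interval_1 using antimono
      by simp (metis order_less_le_trans order_le_less_trans)
    ultimately have "emeasure lborel {0<..v} \<le> distr_fun g y"
      unfolding distr_fun_def by (intro emeasure_mono) (simp_all add: real_interval_borel_measurable)
    then have "ennreal v \<le> distr_fun g y"
      using assms by simp
    then have "ennreal v \<le> ennreal u"
      using y by (rule order_trans)
    then show False using assms by simp
  qed
qed

lemma nn_integral_rearr_eq_rearr2:
  assumes "0 < u"
  shows "(\<integral>\<^sup>+ s\<in>{0<..<u}. rearr f s \<partial>lborel) = ennreal u * rearr2 f u"
  using assms by (simp add: rearr2_def ennreal_times_divide mult.commute[of "ennreal u"] mult_divide_eq_ennreal)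

lemma rearr2_eq_nn_integral_scaled:
  assumes "0 < u"
  shows "rearr2 f u = (\<integral>\<^sup>+ x\<in>{0<..<1}. rearr f (u * x) \<partial>lborel)"
proof -
  have "(\<integral>\<^sup>+ s\<in>{0<..<u}. rearr f s \<partial>lborel)
      = ennreal u * (\<integral>\<^sup>+ x. rearr f (u * x) * indicator {0<..<u} (u * x) \<partial>lborel)"
    using nn_integral_real_affine[of "\<lambda>s. rearr f s * indicator {0<..<u} s" u 0] assms by simp
  also have "(\<lambda>x. indicator {0<..<u} (u * x)) = (indicator {0<..<1} :: real \<Rightarrow> ennreal)"
    using assms by (auto simp: indicator_def zero_less_mult_iff)
  finally show ?thesis
    using assms by (simp add: rearr2_def mult.commute[of "ennreal u"] mult_divide_eq_ennreal)
qed

lemma rearr_le_rearr2: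
  assumes "0 < u"
  shows "rearr f u \<le> rearr2 f u"
proof -
  have "rearr f u = (\<integral>\<^sup>+ x\<in>{0<..<1::real}. rearr f u \<partial>lborel)"
    by (subst nn_integral_cmult_indicator) simp_all
  also have "\<dots> \<le> rearr2 f u"
    unfolding rearr2_eq_nn_integral_scaled[OF assms] using assms
    by (intro nn_integral_mono) (auto simp: indicator_def intro!: rearr_antimono)
  finally show ?thesis .
qed

lemma rearr2_antimono:
  assumes "0 < s" "s \<le> t"
  shows "rearr2 f t \<le> rearr2 f s"
  unfolding rearr2_eq_nn_integral_scaled[OF assms(1)] rearr2_eq_nn_integral_scaled[OF order_less_le_trans[OF assms]]
  using assms by (intro nn_integral_mono) (auto simp: indicator_def intro!: rearr_antimono)

lemma rearr2_le_double:
  assumes "0 < u" "u \<le> v" "v \<le> 2 * u"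
  shows "rearr2 f u \<le> 2 * rearr2 f v"
proof -
  have "ennreal u * rearr2 f u = (\<integral>\<^sup>+ s\<in>{0<..<u}. rearr f s \<partial>lborel)"
    using assms by (simp add: nn_integral_rearr_eq_rearr2)
  also have "\<dots> \<le> (\<integral>\<^sup>+ s\<in>{0<..<v}. rearr f s \<partial>lborel)"
    using assms by (intro nn_integral_mono) (auto simp: indicator_def)
  also have "\<dots> = ennreal v * rearr2 f v"
    using assms by (simp add: nn_integral_rearr_eq_rearr2)
  also have "\<dots> \<le> ennreal (2 * u) * rearr2 f v"
    using assms by (intro mult_right_mono ennreal_leI) auto
  also have "\<dots> = ennreal u * (2 * rearr2 f v)"
    using assms by (simp add: ennreal_mult mult_ac)
  finally show ?thesis
    using assms by (simp add: ennreal_mult_le_mult_iff)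
qed

lemma rearr2_le_rearr_rearr2:
  assumes "0 < u" "u < 1"
  shows "rearr2 f u \<le> 2 * rearr (rearr2 f) u"
proof -
  define v where "v = min (2 * u) ((1 + u) / 2)"
  have v: "u < v" "v < 1" "v \<le> 2 * u" using assms unfolding v_def by (auto simp: min_def)
  have "rearr2 f u \<le> 2 * rearr2 f v"
    using assms v by (intro rearr2_le_double) auto
  also have "\<dots> \<le> 2 * rearr (rearr2 f) u"
    using assms v by (intro mult_left_mono antimono_le_rearr rearr2_antimono) auto
  finally show ?thesis .
qed

lemma rearr2_le_average:
  fixes g :: "real \<Rightarrow> ennreal"
  assumes "\<And>x y. 0 < x \<Longrightarrow> x \<le> y \<Longrightarrow> y < 1 \<Longrightarrow> g y \<le> g x"
    and "t < 1"
  shows "rearr2 g t \<le> (\<integral>\<^sup>+ s\<in>{0<..<t}. g s \<partial>lborel) / ennreal t"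
  unfolding rearr2_def using assms
  by (intro divide_right_mono_ennreal nn_integral_mono)
     (auto simp: indicator_def intro!: rearr_le_antimono)

definition tail_sup :: "(real \<Rightarrow> real) \<Rightarrow> (real \<Rightarrow> ennreal) \<Rightarrow> real \<Rightarrow> ennreal" where
  "tail_sup I f t = (SUP s\<in>{t..<1}. ennreal (s / I s) * rearr f s)"

lemma T_op_eq_tail_sup: "T_op I f t = ennreal (I t / t) * tail_sup I f t"
  by (simp add: T_op_def tail_sup_def)

lemma T_op_cong:
  assumes "\<And>x. 0 < x \<Longrightarrow> x < 1 \<Longrightarrow> I x = J x" and "0 < t" "t < 1"
  shows "T_op I f t = T_op J f t"
  using assms by (simp add: T_op_def)

lemma rearr2_T_op_cong:
  assumes "\<And>x. 0 < x \<Longrightarrow> x < 1 \<Longrightarrow> I x = J x"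
  shows "rearr2 (T_op I f) t = rearr2 (T_op J f) t"
  unfolding rearr2_def using rearr_cong[of "T_op I f" "T_op J f"] T_op_cong[OF assms] by simp

lemma T_op_le_T_op_rearr2:
  assumes "0 < t"
  shows "T_op I f t \<le> 2 * T_op I (rearr2 f) t"
proof -
  have "ennreal (s / I s) * rearr f s \<le> 2 * (ennreal (s / I s) * rearr (rearr2 f) s)"
    if "t \<le> s" "s < 1" for s
  proof -
    have "rearr f s \<le> 2 * rearr (rearr2 f) s"
      using that assms rearr_le_rearr2[of s f] rearr2_le_rearr_rearr2[of s f] by simp
    then have "ennreal (s / I s) * rearr f s \<le> ennreal (s / I s) * (2 * rearr (rearr2 f) s)"
      by (rule mult_left_mono) simp
    then show ?thesis by (simp add: mult.left_commute)
  qed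
  then have "tail_sup I f t \<le> (SUP s\<in>{t..<1}. 2 * (ennreal (s / I s) * rearr (rearr2 f) s))"
    unfolding tail_sup_def by (intro SUP_mono) fastforce
  then have "tail_sup I f t \<le> 2 * tail_sup I (rearr2 f) t"
    by (simp add: tail_sup_def SUP_mult_left_ennreal)
  then have "ennreal (I t / t) * tail_sup I f t \<le> ennreal (I t / t) * (2 * tail_sup I (rearr2 f) t)"
    by (rule mult_left_mono) simp
  then show ?thesis
    unfolding T_op_eq_tail_sup by (simp add: mult.left_commute)
qed

lemma nn_integral_wedge_swap:
  fixes w v :: "real \<Rightarrow> ennreal"
  assumes [measurable]: "w \<in> borel_measurable borel" "v \<in> borel_measurable borel"
  shows "(\<integral>\<^sup>+ s\<in>{0<..<t}. w s * (\<integral>\<^sup>+ r\<in>{s/2<..<t}. v r \<partial>lborel) \<partial>lborel)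
    = (\<integral>\<^sup>+ r\<in>{0<..<t}. v r * (\<integral>\<^sup>+ s\<in>{0<..<min (2 * r) t}. w s \<partial>lborel) \<partial>lborel)"
proof -
  define K where "K s r = (if 0 < s \<and> s < t \<and> s/2 < r \<and> r < t then w s * v r else 0)" for s r
  have K_measurable: "(\<lambda>(s, r). K s r) \<in> borel_measurable (lborel \<Otimes>\<^sub>M lborel)"
    unfolding K_def by measurable
  have K_s: "(\<integral>\<^sup>+ r. K s r \<partial>lborel) = w s * (\<integral>\<^sup>+ r\<in>{s/2<..<t}. v r \<partial>lborel) * indicator {0<..<t} s" for s
  proof -
    have "(\<integral>\<^sup>+ r. K s r \<partial>lborel) = (\<integral>\<^sup>+ r. (w s * indicator {0<..<t} s) * (v r * indicator {s/2<..<t} r) \<partial>lborel)"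
      by (intro nn_integral_cong) (auto simp: K_def indicator_def)
    also have "\<dots> = w s * indicator {0<..<t} s * (\<integral>\<^sup>+ r\<in>{s/2<..<t}. v r \<partial>lborel)"
      by (rule nn_integral_cmult) measurable
    finally show ?thesis by (simp add: mult_ac)
  qed
  have K_r: "(\<integral>\<^sup>+ s. K s r \<partial>lborel) = v r * (\<integral>\<^sup>+ s\<in>{0<..<min (2 * r) t}. w s \<partial>lborel) * indicator {0<..<t} r" for r
  proof -
    have "(\<integral>\<^sup>+ s. K s r \<partial>lborel) = (\<integral>\<^sup>+ s. (v r * indicator {0<..<t} r) * (w s * indicator {0<..<min (2 * r) t} s) \<partial>lborel)"
      by (intro nn_integral_cong) (auto simp: K_def indicator_def mult.commute)
    also have "\<dots> = v r * indicator {0<..<t} r * (\<integral>\<^sup>+ s\<in>{0<..<min (2 * r) t}. w s \<partial>lborel)"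
      by (rule nn_integral_cmult) measurable
    finally show ?thesis by (simp add: mult_ac)
  qed
  show ?thesis
    using lborel_pair.Fubini'[OF K_measurable] by (simp add: K_s K_r)
qed

text \<open>
  Only the values of \<open>I\<close> on \<open>(0,1)\<close> matter; extending \<open>I\<close> monotonically to the whole line
  makes it Borel measurable, which additivity of the integral and Fubini's theorem require.
\<close>

locale quasiconcave_mono =
  fixes I :: "real \<Rightarrow> real"
  assumes mono: "mono I"
    and pos: "\<And>x. 0 < x \<Longrightarrow> x < 1 \<Longrightarrow> 0 < I x"
    and ratio_antimono: "\<And>s t. 0 < s \<Longrightarrow> s \<le> t \<Longrightarrow> t < 1 \<Longrightarrow> I t / t \<le> I s / s"
begin

lemma I_measurable [measurable]: "I \<in> borel_measurable borel"
  using mono by (rule borel_measurable_mono)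

lemma le_double:
  assumes "0 < r" "r \<le> m" "m \<le> 2 * r" "m < 1"
  shows "I m \<le> 2 * I r"
proof -
  have "I m \<le> m * (I r / r)"
    using ratio_antimono[of r m] assms by (simp add: field_simps)
  also have "\<dots> \<le> 2 * r * (I r / r)"
    using assms pos[of r] by (intro mult_right_mono) auto
  finally show ?thesis using assms by simp
qed

lemma rearr_le_T_op:
  assumes "0 < t" "t < 1"
  shows "rearr f t \<le> T_op I f t"
proof -
  have "ennreal (I t / t) * ennreal (t / I t) = 1"
    using assms pos[OF assms] by (simp flip: ennreal_mult)
  then have "rearr f t = ennreal (I t / t) * (ennreal (t / I t) * rearr f t)"
    by (simp add: mult.assoc[symmetric])
  also have "\<dots> \<le> T_op I f t"
    unfolding T_op_def using assms by (intro mult_left_mono SUP_upper) auto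
  finally show ?thesis .
qed

lemma T_op_antimono:
  assumes "0 < s" "s \<le> t" "t < 1"
  shows "T_op I f t \<le> T_op I f s"
  unfolding T_op_eq_tail_sup tail_sup_def using assms ratio_antimono[OF assms]
  by (intro mult_mono ennreal_leI SUP_subset_mono) auto

lemma weighted_le_nn_integral:
  fixes \<phi> :: "real \<Rightarrow> ennreal"
  assumes antimono: "\<And>x y. x \<le> y \<Longrightarrow> \<phi> y \<le> \<phi> x" and u: "0 < u" "u < 1"
  shows "ennreal (u / I u) * \<phi> u \<le> 2 * (\<integral>\<^sup>+ r\<in>{u/2<..<u}. ennreal (1 / I r) * \<phi> r \<partial>lborel)"
proof -
  have "ennreal (u / I u) * \<phi> u = 2 * (ennreal (1 / I u) * \<phi> u * ennreal (u / 2))"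
    using u pos[OF u] by (simp add: ennreal_mult[symmetric] mult_ac flip: ennreal_numeral)
  also have "\<dots> = 2 * (\<integral>\<^sup>+ r\<in>{u/2<..<u}. ennreal (1 / I u) * \<phi> u \<partial>lborel)"
    using u by (subst nn_integral_cmult_indicator) auto
  also have "\<dots> \<le> 2 * (\<integral>\<^sup>+ r\<in>{u/2<..<u}. ennreal (1 / I r) * \<phi> r \<partial>lborel)"
  proof (intro mult_left_mono nn_integral_mono)
    fix r
    show "ennreal (1 / I u) * \<phi> u * indicator {u/2<..<u} r \<le> ennreal (1 / I r) * \<phi> r * indicator {u/2<..<u} r"
      using u pos[of r] monoD[OF mono, of r u]
      by (cases "u/2 < r \<and> r < u") (auto intro!: mult_mono ennreal_leI divide_left_mono antimono)
  qed simp
  finally show ?thesis .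
qed

lemma tail_sup_le_split:
  assumes "0 < s" "s < t" "t < 1"
  shows "tail_sup I f s
    \<le> tail_sup I f t + 2 * (\<integral>\<^sup>+ r\<in>{s/2<..<t}. ennreal (1 / I r) * rearr f r \<partial>lborel)"
proof -
  have "ennreal (u / I u) * rearr f u
      \<le> tail_sup I f t + 2 * (\<integral>\<^sup>+ r\<in>{s/2<..<t}. ennreal (1 / I r) * rearr f r \<partial>lborel)"
    if u: "s \<le> u" "u < 1" for u
  proof (cases "t \<le> u")
    case True
    then have "ennreal (u / I u) * rearr f u \<le> tail_sup I f t"
      unfolding tail_sup_def using u by (intro SUP_upper) auto
    then show ?thesis by (simp add: add_increasing2)
  next
    case False
    have "ennreal (u / I u) * rearr f u
        \<le> 2 * (\<integral>\<^sup>+ r\<in>{u/2<..<u}. ennreal (1 / I r) * rearr f r \<partial>lborel)"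
      using assms u by (intro weighted_le_nn_integral rearr_antimono) auto
    also have "\<dots> \<le> 2 * (\<integral>\<^sup>+ r\<in>{s/2<..<t}. ennreal (1 / I r) * rearr f r \<partial>lborel)"
      using False u by (intro mult_left_mono nn_integral_mono) (auto intro!: mult_left_mono simp: indicator_def)
    finally show ?thesis by (simp add: add_increasing)
  qed
  then show ?thesis
    unfolding tail_sup_def[of I f s] by (intro SUP_least) auto
qed

lemma nn_integral_weight_measurable [measurable]:
  "(\<lambda>s. \<integral>\<^sup>+ r\<in>{s/2<..<t}. ennreal (1 / I r) * \<phi> r \<partial>lborel) \<in> borel_measurable borel"
  if [measurable]: "\<phi> \<in> borel_measurable borel"
  by (measurable, simp only: greaterThanLessThan_iff, measurable)

lemma weight_integral_le:
  assumes hyp: "\<And>t. 0 < t \<Longrightarrow> t < 1 \<Longrightarrow> (\<integral>\<^sup>+ s\<in>{0<..<t}. ennreal (I s / s) \<partial>lborel) \<le> ennreal (C * I t)"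
    and "0 \<le> C" "0 < r" "r \<le> m" "m \<le> 2 * r" "m < 1"
  shows "ennreal (1 / I r) * (\<integral>\<^sup>+ s\<in>{0<..<m}. ennreal (I s / s) \<partial>lborel) \<le> ennreal (2 * C)"
proof -
  have "ennreal (1 / I r) * (\<integral>\<^sup>+ s\<in>{0<..<m}. ennreal (I s / s) \<partial>lborel) \<le> ennreal (1 / I r) * ennreal (C * I m)"
    using assms by (intro mult_left_mono hyp) auto
  also have "\<dots> = ennreal (C * I m / I r)"
    using assms pos[of r] pos[of m] by (simp flip: ennreal_mult)
  also have "\<dots> \<le> ennreal (2 * C)"
    using assms pos[of r] le_double[of r m] by (intro ennreal_leI) (simp add: field_simps mult_left_mono)
  finally show ?thesis .
qed

lemma hardy_inequality:
  fixes \<phi> :: "real \<Rightarrow> ennreal"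
  assumes hyp: "\<And>t. 0 < t \<Longrightarrow> t < 1 \<Longrightarrow> (\<integral>\<^sup>+ s\<in>{0<..<t}. ennreal (I s / s) \<partial>lborel) \<le> ennreal (C * I t)"
    and "0 \<le> C" and [measurable]: "\<phi> \<in> borel_measurable borel" and t: "0 < t" "t < 1"
  shows "(\<integral>\<^sup>+ s\<in>{0<..<t}. ennreal (I s / s) * (\<integral>\<^sup>+ r\<in>{s/2<..<t}. ennreal (1 / I r) * \<phi> r \<partial>lborel) \<partial>lborel)
    \<le> ennreal (2 * C) * (\<integral>\<^sup>+ r\<in>{0<..<t}. \<phi> r \<partial>lborel)"
proof -
  have "(\<integral>\<^sup>+ s\<in>{0<..<t}. ennreal (I s / s) * (\<integral>\<^sup>+ r\<in>{s/2<..<t}. ennreal (1 / I r) * \<phi> r \<partial>lborel) \<partial>lborel)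
      = (\<integral>\<^sup>+ r\<in>{0<..<t}. \<phi> r * (ennreal (1 / I r) * (\<integral>\<^sup>+ s\<in>{0<..<min (2 * r) t}. ennreal (I s / s) \<partial>lborel)) \<partial>lborel)"
    by (subst nn_integral_wedge_swap) (simp_all add: mult_ac)
  also have "\<dots> \<le> (\<integral>\<^sup>+ r\<in>{0<..<t}. \<phi> r * ennreal (2 * C) \<partial>lborel)"
  proof (intro nn_integral_mono)
    fix r
    show "\<phi> r * (ennreal (1 / I r) * (\<integral>\<^sup>+ s\<in>{0<..<min (2 * r) t}. ennreal (I s / s) \<partial>lborel)) * indicator {0<..<t} r
        \<le> \<phi> r * ennreal (2 * C) * indicator {0<..<t} r"
      using t \<open>0 \<le> C\<close>
      by (cases "0 < r \<and> r < t") (auto intro!: mult_left_mono mult_right_mono weight_integral_le[OF hyp])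
  qed
  also have "\<dots> = ennreal (2 * C) * (\<integral>\<^sup>+ r\<in>{0<..<t}. \<phi> r \<partial>lborel)"
    by (subst nn_integral_cmult[symmetric]) (simp_all add: mult_ac)
  finally show ?thesis .
qed

lemma average_T_op_le:
  assumes hyp: "\<And>t. 0 < t \<Longrightarrow> t < 1 \<Longrightarrow> (\<integral>\<^sup>+ s\<in>{0<..<t}. ennreal (I s / s) \<partial>lborel) \<le> ennreal (C * I t)"
    and "0 \<le> C" and t: "0 < t" "t < 1"
  shows "(\<integral>\<^sup>+ s\<in>{0<..<t}. T_op I f s \<partial>lborel) / ennreal t
    \<le> ennreal C * T_op I f t + ennreal (4 * C) * rearr2 f t"
proof -
  let ?H = "\<lambda>s. \<integral>\<^sup>+ r\<in>{s/2<..<t}. ennreal (1 / I r) * rearr f r \<partial>lborel"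
  have "(\<integral>\<^sup>+ s\<in>{0<..<t}. T_op I f s \<partial>lborel)
      \<le> (\<integral>\<^sup>+ s. ennreal (I s / s) * indicator {0<..<t} s * tail_sup I f t
           + 2 * (ennreal (I s / s) * ?H s * indicator {0<..<t} s) \<partial>lborel)"
  proof (intro nn_integral_mono)
    fix s
    have "T_op I f s * indicator {0<..<t} s
        \<le> ennreal (I s / s) * (tail_sup I f t + 2 * ?H s) * indicator {0<..<t} s"
      unfolding T_op_eq_tail_sup using t
      by (cases "0 < s \<and> s < t") (auto intro!: mult_left_mono tail_sup_le_split)
    then show "T_op I f s * indicator {0<..<t} s \<le> ennreal (I s / s) * indicator {0<..<t} s * tail_sup I f t
           + 2 * (ennreal (I s / s) * ?H s * indicator {0<..<t} s)"
      by (simp add: distrib_left distrib_right mult_ac)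
  qed
  also have "\<dots> = (\<integral>\<^sup>+ s\<in>{0<..<t}. ennreal (I s / s) \<partial>lborel) * tail_sup I f t
      + 2 * (\<integral>\<^sup>+ s\<in>{0<..<t}. ennreal (I s / s) * ?H s \<partial>lborel)"
    by (subst nn_integral_add) (auto simp: nn_integral_multc nn_integral_cmult)
  also have "\<dots> \<le> ennreal (C * I t) * tail_sup I f t
      + 2 * (ennreal (2 * C) * (\<integral>\<^sup>+ r\<in>{0<..<t}. rearr f r \<partial>lborel))"
    using t \<open>0 \<le> C\<close> by (intro add_mono mult_right_mono mult_left_mono hyp hardy_inequality) auto
  also have "\<dots> = ennreal t * (ennreal C * T_op I f t + ennreal (4 * C) * rearr2 f t)"
  proof -
    have "ennreal (C * I t) = ennreal C * (ennreal t * ennreal (I t / t))"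
      using t \<open>0 \<le> C\<close> pos[OF t] by (simp flip: ennreal_mult)
    moreover have "2 * ennreal (2 * C) = ennreal (4 * C)"
      using \<open>0 \<le> C\<close> by (simp flip: ennreal_mult ennreal_numeral)
    ultimately show ?thesis
      using t by (simp add: T_op_eq_tail_sup nn_integral_rearr_eq_rearr2 distrib_left mult_ac)
  qed
  finally show ?thesis
    using t by (simp add: divide_le_posI_ennreal mult.commute)
qed

lemma rearr2_T_op_le:
  assumes hyp: "\<And>t. 0 < t \<Longrightarrow> t < 1 \<Longrightarrow> (\<integral>\<^sup>+ s\<in>{0<..<t}. ennreal (I s / s) \<partial>lborel) \<le> ennreal (C * I t)"
    and "0 \<le> C" and t: "0 < t" "t < 1"
  shows "rearr2 (T_op I f) t \<le> ennreal (10 * C) * T_op I (rearr2 f) t"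
proof -
  have "rearr2 (T_op I f) t \<le> (\<integral>\<^sup>+ s\<in>{0<..<t}. T_op I f s \<partial>lborel) / ennreal t"
    using t by (intro rearr2_le_average T_op_antimono)
  also have "\<dots> \<le> ennreal C * T_op I f t + ennreal (4 * C) * rearr2 f t"
    using assms by (rule average_T_op_le)
  also have "\<dots> \<le> ennreal C * (2 * T_op I (rearr2 f) t) + ennreal (4 * C) * (2 * T_op I (rearr2 f) t)"
  proof (intro add_mono mult_left_mono)
    show "rearr2 f t \<le> 2 * T_op I (rearr2 f) t"
      using rearr2_le_rearr_rearr2[OF t] rearr_le_T_op[OF t, of "rearr2 f"]
      by (metis mult_left_mono order_trans zero_le)
  qed (use t T_op_le_T_op_rearr2 in auto)
  also have "\<dots> = ennreal (10 * C) * T_op I (rearr2 f) t"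
    using \<open>0 \<le> C\<close> by (simp add: distrib_right[symmetric] mult.assoc[symmetric] flip: ennreal_mult ennreal_numeral ennreal_plus)
  finally show ?thesis .
qed

lemma rearr2_T_op_bounded:
  assumes "\<exists>C. \<forall>t\<in>{0<..<1}. (\<integral>\<^sup>+ s\<in>{0<..<t}. ennreal (I s / s) \<partial>lborel) \<le> ennreal (C * I t)"
  shows "\<exists>C. \<forall>f t. 0 < t \<longrightarrow> t < 1 \<longrightarrow> rearr2 (T_op I f) t \<le> ennreal C * T_op I (rearr2 f) t"
proof -
  obtain C where C: "\<forall>t\<in>{0<..<1}. (\<integral>\<^sup>+ s\<in>{0<..<t}. ennreal (I s / s) \<partial>lborel) \<le> ennreal (C * I t)"
    using assms by blast
  have "(\<integral>\<^sup>+ s\<in>{0<..<t}. ennreal (I s / s) \<partial>lborel) \<le> ennreal (max C 0 * I t)"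
    if "0 < t" "t < 1" for t
  proof -
    have "(\<integral>\<^sup>+ s\<in>{0<..<t}. ennreal (I s / s) \<partial>lborel) \<le> ennreal (C * I t)"
      using C that by simp
    also have "\<dots> \<le> ennreal (max C 0 * I t)"
      using pos[OF that] by (intro ennreal_leI mult_right_mono) auto
    finally show ?thesis .
  qed
  then show ?thesis
    by (intro exI[of _ "10 * max C 0"] allI impI rearr2_T_op_le) auto
qed

end

lemma quasiconcave_mono_extension:
  assumes "quasiconcave I"
  obtains J where "quasiconcave_mono J" and "\<And>x. 0 < x \<Longrightarrow> x < 1 \<Longrightarrow> J x = I x"
proof
  define J where "J x = (if x \<le> 0 then 0 else if x < 1 then I x else 1)" for x
  have I: "bij_betw I {0<..<1} {0<..<1}" "mono_on {0<..<1} I"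
    "\<And>s t. 0 < s \<Longrightarrow> s \<le> t \<Longrightarrow> t < 1 \<Longrightarrow> I t / t \<le> I s / s"
    using assms unfolding quasiconcave_def by auto
  have "I x \<in> {0<..<1}" if "0 < x" "x < 1" for x
    using I(1) that unfolding bij_betw_def by auto
  then show "quasiconcave_mono J"
    using I(2,3) unfolding J_def by unfold_locales (auto simp: mono_def mono_on_def less_imp_le)
  show "J x = I x" if "0 < x" "x < 1" for x
    using that by (simp add: J_def)
qed

theorem theorem3p12:
  fixes I :: "real \<Rightarrow> real"
  assumes "quasiconcave I"
    and "\<exists>C. \<forall>t\<in>{0<..<1}.
           (\<integral>\<^sup>+ s \<in> {0<..<t}. ennreal (I s / s) \<partial>lborel) \<le> ennreal (C * I t)"
  shows "\<exists>C. \<forall>f :: real \<Rightarrow> ennreal. f \<in> borel_measurable (restrict_space lborel {0<..<1}) \<longrightarrow>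
           (\<forall>t\<in>{0<..<1}. rearr2 (T_op I f) t \<le> ennreal C * T_op I (rearr2 f) t)"
proof -
  obtain J where J_qc: "quasiconcave_mono J" and J: "\<And>x. 0 < x \<Longrightarrow> x < 1 \<Longrightarrow> J x = I x"
    using quasiconcave_mono_extension[OF assms(1)] by blast
  obtain C0 where C0: "\<forall>t\<in>{0<..<1}. (\<integral>\<^sup>+ s\<in>{0<..<t}. ennreal (I s / s) \<partial>lborel) \<le> ennreal (C0 * I t)"
    using assms(2) by blast
  have "(\<integral>\<^sup>+ s\<in>{0<..<t}. ennreal (J s / s) \<partial>lborel) = (\<integral>\<^sup>+ s\<in>{0<..<t}. ennreal (I s / s) \<partial>lborel)"
    if "t < 1" for t
    using that J by (intro nn_integral_cong) (simp add: indicator_def)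
  with C0 J have "\<forall>t\<in>{0<..<1}. (\<integral>\<^sup>+ s\<in>{0<..<t}. ennreal (J s / s) \<partial>lborel) \<le> ennreal (C0 * J t)"
    by simp
  then obtain C where C: "\<forall>f t. 0 < t \<longrightarrow> t < 1 \<longrightarrow> rearr2 (T_op J f) t \<le> ennreal C * T_op J (rearr2 f) t"
    using quasiconcave_mono.rearr2_T_op_bounded[OF J_qc] by blast
  show ?thesis
  proof (intro exI allI impI ballI)
    fix f :: "real \<Rightarrow> ennreal" and t :: real
    assume "t \<in> {0<..<1}"
    with J show "rearr2 (T_op I f) t \<le> ennreal C * T_op I (rearr2 f) t"
      using C[rule_format, of t f] rearr2_T_op_cong[of J I f t] T_op_cong[of J I t "rearr2 f"] by simp
  qed
qed

end
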